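(* Let $m\geq 1$ and let $H_n$ be a $(2m+1)$-historic tree on $n$ vertices having $b\geq 1$ branchings (so it has $b+1$ external vertices). For $i=1,\dots,b+1$ let $s_i$ be the number of internal vertices of $H_n$ strictly between the $i$-th external vertex (from the left) and the closest branching above it. Let $\underline{\pi}(H_n)$ be the set of permutations $\pi\in S_n$ such that inserting the keys $\pi(1),\pi(2),\dots,\pi(n)$ successively, starting from the tree whose single node contains $\pi(1)$, yields the history $\Phi^{-1}(H_n)$. Then \[ |\underline{\pi}(H_n)|=\left(\frac{(2m+1)!}{(m!)^2}\right)^b\prod_{i=1}^{b+1}(m+s_i)!. \]
   Context: Fix $m\geq 1$. A $B$-tree of order $2m+1$ is a rooted plane search tree whose nodes contain pairwise distinct keys in increasing left-to-right order (a non-leaf node with $k$ keys has $k+1$ children, the $i$-th child's subtree containing keys between the $(i-1)$-th and $i$-th key), every non-root node has between $m$ and $2m$ keys, the root between $1$ and $2m$, and all leaves have equal depth. Insertion: place the new key in the appropriate leaf; whenever a node has $2m+1$ keys, split it, moving the median key up into the parent and forming two nodes of the $m$ smallest and $m$ largest keys (creating a new root with one key if the root splits). $B$-trees are considered up to isomorphism of rooted plane trees, leaves numbered left to right. A history is a sequence $(T_1,\dots,T_n)$ with $T_1$ a single node with one key and each $T_i$ obtained from $T_{i-1}$ by inserting one key. A $(2m+1)$-historic tree on $n$ vertices is a rooted plane tree with vertices labelled bijectively by $\{1,\dots,n\}$, labels increasing along every root-to-leaf path, where (root at height $0$) vertices at heights $2m+j(m+1)$, $j\geq 0$, called branchings,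 have two ordered child slots (left, right), each possibly occupied, and all other vertices have a single child slot. Tree vertices are internal; unoccupied slots are external vertices, ordered left to right. $\Phi$ is the bijection from histories to historic trees defined recursively by: $\Phi(T_1)$ is the one-vertex tree; if $T_{k+1}$ arises from $T_k$ by inserting a key into the $i$-th leaf of $T_k$ (before splits), then $\Phi(T_1,\dots,T_{k+1})$ is $\Phi(T_1,\dots,T_k)$ with a vertex labelled $k+1$ placed at its $i$-th external vertex. *)

theory Defs
  imports Complex_Main "HOL-Combinatorics.Permutations"
begin

text \<open>A B-tree node: list of keys (increasing) and list of children
  (empty for leaves, otherwise one more child than keys).\<close>
datatype btree = BT "nat list" "btree list"

text \<open>Result of inserting into a subtree: either it fits, or the subtree
  splits into a left node, a median key moved up, and a right node.\<close>
datatype bup = Fit btree | Split btree nat btree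

definition node_of :: "nat \<Rightarrow> nat list \<Rightarrow> btree list \<Rightarrow> bup" where
  "node_of m ks ts =
     (if length ks = 2*m+1
      then Split (BT (take m ks) (take (m+1) ts)) (ks ! m) (BT (drop (m+1) ks) (drop (m+1) ts))
      else Fit (BT ks ts))"

fun merge_up :: "bup \<Rightarrow> nat list \<Rightarrow> btree list \<Rightarrow> nat list \<times> btree list" where
  "merge_up (Fit t) ks ts = (ks, t # ts)"
| "merge_up (Split l k r) ks ts = (k # ks, l # r # ts)"

fun ins :: "nat \<Rightarrow> nat \<Rightarrow> btree \<Rightarrow> bup"
and ins_l :: "nat \<Rightarrow> nat \<Rightarrow> nat list \<Rightarrow> btree list \<Rightarrow> nat list \<times> btree list" where
  "ins m x (BT ks ts) =
     (if ts = [] then node_of m (insort x ks) []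
      else (case ins_l m x ks ts of (ks', ts') \<Rightarrow> node_of m ks' ts'))"
| "ins_l m x (k # ks) (t # ts) =
     (if x < k then merge_up (ins m x t) (k # ks) ts
      else (case ins_l m x ks ts of (ks', ts') \<Rightarrow> (k # ks', t # ts')))"
| "ins_l m x [] (t # ts) = merge_up (ins m x t) [] ts"
| "ins_l m x ks [] = (ks, [])"

definition btree_insert :: "nat \<Rightarrow> nat \<Rightarrow> btree \<Rightarrow> btree" where
  "btree_insert m x t = (case ins m x t of Fit t' \<Rightarrow> t' | Split l k r \<Rightarrow> BT [k] [l, r])"

fun nleaves :: "btree \<Rightarrow> nat" where
  "nleaves (BT ks ts) = (if ts = [] then 1 else sum_list (map nleaves ts))"

text \<open>Index (0-based, left to right) of the leaf of t into which the key x
  is placed by insertion (before splits).\<close>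
fun leafidx :: "nat \<Rightarrow> btree \<Rightarrow> nat"
and leafidx_l :: "nat \<Rightarrow> nat list \<Rightarrow> btree list \<Rightarrow> nat" where
  "leafidx x (BT ks ts) = (if ts = [] then 0 else leafidx_l x ks ts)"
| "leafidx_l x (k # ks) (t # ts) =
     (if x < k then leafidx x t else nleaves t + leafidx_l x ks ts)"
| "leafidx_l x [] (t # ts) = leafidx x t"
| "leafidx_l x ks [] = 0"

fun insert_leaves :: "nat \<Rightarrow> btree \<Rightarrow> nat list \<Rightarrow> nat list" where
  "insert_leaves m t [] = []"
| "insert_leaves m t (x # xs) = leafidx x t # insert_leaves m (btree_insert m x t) xs"

text \<open>Rooted plane trees whose child slots are explicit: Ext is an
  unoccupied slot (external vertex), Vtx a ts an internal vertex with label a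
  and child slots ts.\<close>
datatype htree = Ext | Vtx nat "htree list"

definition branching_height :: "nat \<Rightarrow> nat \<Rightarrow> bool" where
  "branching_height m h \<longleftrightarrow> (\<exists>j. h = 2*m + j*(m+1))"

definition slots :: "nat \<Rightarrow> nat \<Rightarrow> nat" where
  "slots m h = (if branching_height m h then 2 else 1)"

fun labels :: "htree \<Rightarrow> nat list" where
  "labels Ext = []"
| "labels (Vtx a ts) = a # concat (map labels ts)"

fun root_label :: "htree \<Rightarrow> nat option" where
  "root_label Ext = None"
| "root_label (Vtx a ts) = Some a"

text \<open>Shape condition (number of child slots per height) and labels
  increasing from parent to child; h is the height of the given subtree.\<close>
fun hwf :: "nat \<Rightarrow> nat \<Rightarrow> htree \<Rightarrow> bool" where
  "hwf m h Ext = True"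
| "hwf m h (Vtx a ts) =
     (length ts = slots m h \<and>
      list_all (\<lambda>t. hwf m (Suc h) t \<and> (case root_label t of None \<Rightarrow> True | Some b \<Rightarrow> a < b)) ts)"

definition historic :: "nat \<Rightarrow> nat \<Rightarrow> htree \<Rightarrow> bool" where
  "historic m n H \<longleftrightarrow> H \<noteq> Ext \<and> hwf m 0 H \<and> distinct (labels H) \<and> set (labels H) = {1..n}"

fun branchings :: "nat \<Rightarrow> nat \<Rightarrow> htree \<Rightarrow> nat" where
  "branchings m h Ext = 0"
| "branchings m h (Vtx a ts) =
     (if branching_height m h then 1 else 0) + sum_list (map (branchings m (Suc h)) ts)"

fun nexts :: "htree \<Rightarrow> nat" where
  "nexts Ext = 1"
| "nexts (Vtx a ts) = sum_list (map nexts ts)"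

text \<open>For each external vertex (left to right), the number of internal
  vertices strictly between it and the closest branching above it.
  c counts internal vertices strictly below the last branching seen.\<close>
fun ext_gaps :: "nat \<Rightarrow> nat \<Rightarrow> nat \<Rightarrow> htree \<Rightarrow> nat list" where
  "ext_gaps m h c Ext = [c]"
| "ext_gaps m h c (Vtx a ts) =
     concat (map (ext_gaps m (Suc h) (if branching_height m h then 0 else Suc c)) ts)"

definition new_vertex :: "nat \<Rightarrow> nat \<Rightarrow> nat \<Rightarrow> htree" where
  "new_vertex m h l = Vtx l (replicate (slots m h) Ext)"

text \<open>Place a vertex labelled l at the i-th (0-based) external vertex.\<close>
fun place :: "nat \<Rightarrow> nat \<Rightarrow> nat \<Rightarrow> nat \<Rightarrow> htree \<Rightarrow> htree"
and place_l :: "nat \<Rightarrow> nat \<Rightarrow> nat \<Rightarrow> nat \<Rightarrow> htree list \<Rightarrow> htree list" where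
  "place m h l i Ext = (if i = 0 then new_vertex m h l else Ext)"
| "place m h l i (Vtx a ts) = Vtx a (place_l m (Suc h) l i ts)"
| "place_l m h l i [] = []"
| "place_l m h l i (t # ts) =
     (if i < nexts t then place m h l i t # ts else t # place_l m h l (i - nexts t) ts)"

fun build :: "nat \<Rightarrow> nat \<Rightarrow> htree \<Rightarrow> nat list \<Rightarrow> htree" where
  "build m k T [] = T"
| "build m k T (i # is) = build m (Suc k) (place m 0 k i T) is"

text \<open>Phi applied to the history obtained by inserting the keys xs
  successively (first key forms the one-key root): vertex k+1 is placed at
  the external vertex with the index of the leaf receiving the (k+1)-st key.\<close>
fun Phi_keys :: "nat \<Rightarrow> nat list \<Rightarrow> htree" where
  "Phi_keys m [] = Ext"
| "Phi_keys m (x # xs) = build m 2 (new_vertex m 0 1) (insert_leaves m (BT [x] []) xs)"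

end

theory Submission
  imports Defs
begin

text \<open>Abstract a B-tree to its list of leaf loads (keys per leaf, left to
  right). Inserting a key into leaf \<open>i\<close> raises that load by one, and a load reaching
  \<open>2m+1\<close> becomes two loads \<open>m, m\<close>. A leaf with \<open>a\<close> keys offers \<open>a + 1\<close> gaps and the
  receiving leaf depends only on the rank of the new key among those present, so for a
  fixed sequence \<open>\<sigma>\<close> of receiving leaves the key orders producing it number
  \<open>\<Prod> (a\<^sub>k + 1)\<close>, the product of the gap counts of the chosen leaves.

  On the side of historic trees every external vertex carries the load of the
  corresponding leaf, a function of its height; placing a vertex at external vertex \<open>i\<close>
  changes these loads exactly like insertion into leaf \<open>i\<close>. The weight
  \<open>ratio\<^sup>b \<cdot> \<Prod> (load)!\<close> therefore grows by the factor \<open>a + 1\<close> at each step, a split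
  being compensated by the new branching because \<open>(2m+1)! = ratio \<cdot> (m!)\<^sup>2\<close>. As
  \<open>\<Phi>\<close> is a bijection, the count for \<open>H\<close> equals its weight, which is the stated
  product since below the first branching the load is \<open>m\<close> plus the gap.\<close>

lemma insort_append_less: "\<forall>b\<in>set B. x < b \<Longrightarrow> insort x (A @ B) = insort x A @ B"
  by (induction A) (auto simp: insort_is_Cons less_imp_le)

lemma insort_append_greater: "\<forall>a\<in>set A. a < x \<Longrightarrow> insort x (A @ B) = A @ insort x B"
  by (induction A) auto

lemma card_filter_bij_betw:
  assumes "bij_betw f A B"
  shows "card {a \<in> A. P (f a)} = card {b \<in> B. P b}"
proof -
  have "f ` {a \<in> A. P (f a)} = {b \<in> f ` A. P b}"
    by blast
  also have "f ` A = B"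
    using assms by (rule bij_betw_imp_surj_on)
  finally have img: "f ` {a \<in> A. P (f a)} = {b \<in> B. P b}" .
  have "bij_betw f {a \<in> A. P (f a)} {b \<in> B. P b}"
    using bij_betw_subset[OF assms _ img] by simp
  then show ?thesis
    by (rule bij_betw_same_card)
qed

definition rank :: "nat set \<Rightarrow> nat \<Rightarrow> nat" where
  "rank S x = card {y \<in> S. y < x}"

lemma bij_betw_rank:
  assumes "finite S"
  shows "bij_betw (rank S) S {..<card S}"
proof -
  have "strict_mono_on S (rank S)"
    unfolding rank_def using assms by (intro strict_mono_onI psubset_card_mono) auto
  then have "inj_on (rank S) S"
    by (rule strict_mono_on_imp_inj_on)
  moreover have "rank S ` S \<subseteq> {..<card S}"
    unfolding rank_def using assms by (auto intro!: psubset_card_mono)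
  ultimately show ?thesis
    using assms by (simp add: bij_betw_def card_image card_subset_eq)
qed

lemma bij_betw_permutes_lists:
  "bij_betw (\<lambda>p. map p [1..<Suc n]) {p. p permutes {1..n}} {xs. distinct xs \<and> set xs = {1..n}}"
proof (rule bij_betw_imageI)
  show "inj_on (\<lambda>p. map p [1..<Suc n]) {p. p permutes {1..n}}"
  proof (rule inj_onI)
    fix p q
    assume "p \<in> {p. p permutes {1..n}}" "q \<in> {p. p permutes {1..n}}"
      and "map p [1..<Suc n] = map q [1..<Suc n]"
    then have "p x = q x" for x
      by (cases "x \<in> {1..n}") (auto simp: map_eq_conv permutes_not_in simp del: upt_Suc)
    then show "p = q"
      by blast
  qed
  show "(\<lambda>p. map p [1..<Suc n]) ` {p. p permutes {1..n}} = {xs. distinct xs \<and> set xs = {1..n}}"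
  proof (rule set_eqI, rule iffI)
    fix xs
    assume "xs \<in> (\<lambda>p. map p [1..<Suc n]) ` {p. p permutes {1..n}}"
    then obtain p where "p permutes {1..n}" "xs = map p [1..<Suc n]"
      by auto
    moreover have "set [1..<Suc n] = {1..n}"
      by auto
    ultimately show "xs \<in> {xs. distinct xs \<and> set xs = {1..n}}"
      by (simp del: upt_Suc add: distinct_map permutes_inj_on permutes_image)
  next
    fix xs
    assume "xs \<in> {xs. distinct xs \<and> set xs = {1..n}}"
    then have xs: "distinct xs" "set xs = {1..n}" "length xs = n"
      using distinct_card[of xs] by auto
    define p where "p i = (if i \<in> {1..n} then xs ! (i - 1) else i)" for i
    have map_p: "map p [1..<Suc n] = xs"
      by (rule nth_equalityI) (auto simp: xs(3) p_def simp del: upt_Suc)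
    then have "p ` {1..n} = {1..n}"
      using xs(2) by (metis atLeastLessThanSuc_atLeastAtMost set_map set_upt)
    then have "bij_betw p {1..n} {1..n}"
      by (simp add: bij_betw_def eq_card_imp_inj_on)
    then have "p permutes {1..n}"
      by (rule bij_imp_permutes) (auto simp: p_def)
    then show "xs \<in> (\<lambda>p. map p [1..<Suc n]) ` {p. p permutes {1..n}}"
      using map_p by auto
  qed
qed

section \<open>B-trees seen through their leaf loads\<close>

fun inorder :: "btree \<Rightarrow> nat list"
and inorder_list :: "nat list \<Rightarrow> btree list \<Rightarrow> nat list" where
  "inorder (BT ks ts) = (if ts = [] then ks else inorder_list ks ts)"
| "inorder_list (k # ks) (t # ts) = inorder t @ k # inorder_list ks ts"
| "inorder_list [] (t # ts) = inorder t"
| "inorder_list ks [] = []"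

fun loads :: "btree \<Rightarrow> nat list" where
  "loads (BT ks ts) = (if ts = [] then [length ks] else concat (map loads ts))"

fun wf_btree :: "btree \<Rightarrow> bool" where
  "wf_btree (BT ks ts) = (ts = [] \<or> (length ts = Suc (length ks) \<and> list_all wf_btree ts))"

fun inorder_up :: "bup \<Rightarrow> nat list" where
  "inorder_up (Fit t) = inorder t"
| "inorder_up (Split l k r) = inorder l @ k # inorder r"

fun loads_up :: "bup \<Rightarrow> nat list" where
  "loads_up (Fit t) = loads t"
| "loads_up (Split l k r) = loads l @ loads r"

fun wf_up :: "bup \<Rightarrow> bool" where
  "wf_up (Fit t) = wf_btree t"
| "wf_up (Split l k r) = (wf_btree l \<and> wf_btree r)"

definition add_key :: "nat \<Rightarrow> nat \<Rightarrow> nat list \<Rightarrow> nat list" where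
  "add_key m i L = take i L @ (if L ! i = 2*m then [m, m] else [Suc (L ! i)]) @ drop (Suc i) L"

lemma add_key_append_left: "i < length A \<Longrightarrow> add_key m i (A @ B) = add_key m i A @ B"
  by (simp add: add_key_def nth_append)

lemma add_key_append_right:
  "length A \<le> i \<Longrightarrow> add_key m i (A @ B) = A @ add_key m (i - length A) B"
  by (simp add: add_key_def nth_append Suc_diff_le)

lemma sum_add_key:
  assumes "i < length L"
  shows "sum_list (map Suc (add_key m i L)) = Suc (sum_list (map Suc L))"
proof -
  have "L = take i L @ L ! i # drop (Suc i) L"
    using assms by (simp add: id_take_nth_drop)
  then have "sum_list (map Suc L) =
      sum_list (map Suc (take i L)) + Suc (L ! i) + sum_list (map Suc (drop (Suc i) L))"
    by (metis add.assoc list.simps(9) map_append sum_list.Cons sum_list_append)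
  then show ?thesis
    by (simp add: add_key_def)
qed

lemma nleaves_eq_length_loads: "nleaves t = length (loads t)"
  by (induction t rule: loads.induct)
     (auto simp: length_concat intro!: arg_cong[where f = sum_list])

lemma inorder_list_Cons:
  "inorder_list ks (t # ts) = inorder t @ (case ks of [] \<Rightarrow> [] | k # ks' \<Rightarrow> k # inorder_list ks' ts)"
  by (cases ks) auto

lemma inorder_list_split:
  "length ts = Suc (length ks) \<Longrightarrow> j < length ks \<Longrightarrow>
   inorder_list (take j ks) (take (Suc j) ts) @ ks ! j # inorder_list (drop (Suc j) ks) (drop (Suc j) ts)
     = inorder_list ks ts"
proof (induction ks arbitrary: j ts)
  case Nil
  then show ?case by simp
next
  case (Cons k ks)
  then obtain t ts' where ts: "ts = t # ts'"
    by (cases ts) auto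
  show ?case
  proof (cases j)
    case 0
    then show ?thesis
      using Cons.prems ts by (cases ts') (auto simp: inorder_list_Cons)
  next
    case (Suc j')
    then have "j' < length ks" "ks \<noteq> []"
      using Cons.prems by auto
    then obtain t' ts'' where "ts' = t' # ts''"
      using Cons.prems ts by (cases ts') auto
    then show ?thesis
      using Cons.IH[of ts' j'] Cons.prems ts Suc \<open>j' < length ks\<close>
      by (cases ks) (auto simp: inorder_list_Cons split: list.splits)
  qed
qed

lemma node_of_leaf:
  "wf_up (node_of m ks []) \<and> inorder_up (node_of m ks []) = ks \<and>
   loads_up (node_of m ks []) = (if length ks = 2*m+1 then [m, m] else [length ks])"
proof (cases "length ks = 2*m+1")
  case True
  then have "take m ks @ ks ! m # drop (Suc m) ks = ks"
    by (simp add: id_take_nth_drop[symmetric])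
  then show ?thesis
    using True by (simp add: node_of_def)
qed (simp add: node_of_def)

lemma node_of_inner:
  assumes "length ts = Suc (length ks)" "list_all wf_btree ts"
  shows "wf_up (node_of m ks ts) \<and> inorder_up (node_of m ks ts) = inorder_list ks ts \<and>
         loads_up (node_of m ks ts) = concat (map loads ts)"
proof (cases "length ks = 2*m+1")
  case True
  have "concat (map loads (take (Suc m) ts)) @ concat (map loads (drop (Suc m) ts)) =
        concat (map loads ts)"
    by (metis append_take_drop_id concat_append map_append)
  moreover have "list_all wf_btree (take (Suc m) ts)" "list_all wf_btree (drop (Suc m) ts)"
    using assms(2) by (auto simp: list_all_iff dest: in_set_takeD in_set_dropD)
  moreover have "ts \<noteq> []"
    using assms(1) by auto
  ultimately show ?thesis
    using True assms inorder_list_split[OF assms(1), of m] by (simp add: node_of_def)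
next
  case False
  then show ?thesis
    using assms by (auto simp: node_of_def)
qed

lemma merge_up_inorder_loads:
  assumes "wf_up u" "length ts = length ks" "list_all wf_btree ts"
  shows "case merge_up u ks ts of (ks', ts') \<Rightarrow>
           length ts' = Suc (length ks') \<and> list_all wf_btree ts' \<and>
           inorder_list ks' ts' =
             inorder_up u @ (case ks of [] \<Rightarrow> [] | k # ks0 \<Rightarrow> k # inorder_list ks0 ts) \<and>
           concat (map loads ts') = loads_up u @ concat (map loads ts)"
  using assms by (cases u) (auto simp: inorder_list_Cons)

lemma sorted_inorder_list_Cons:
  assumes "sorted_wrt (<) (inorder_list (k # ks) (t # ts))"
  shows "\<forall>a\<in>set (inorder t). a < k" "\<forall>b\<in>set (inorder_list ks ts). k < b"
    "sorted_wrt (<) (inorder t)" "sorted_wrt (<) (inorder_list ks ts)"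
  using assms by (auto simp: sorted_wrt_append)

lemma insort_inorder_list_Cons:
  assumes "sorted_wrt (<) (inorder_list (k # ks) (t # ts))" "x \<noteq> k"
  shows "insort x (inorder_list (k # ks) (t # ts)) =
    (if x < k then insort x (inorder t) @ k # inorder_list ks ts
     else inorder t @ k # insort x (inorder_list ks ts))"
proof (cases "x < k")
  case True
  then have "\<forall>b\<in>set (k # inorder_list ks ts). x < b"
    using sorted_inorder_list_Cons[OF assms(1)] by auto
  then show ?thesis
    using True insort_append_less[of "k # inorder_list ks ts" x "inorder t"] by simp
next
  case False
  then have "\<forall>a\<in>set (inorder t @ [k]). a < x"
    using sorted_inorder_list_Cons[OF assms(1)] assms(2) by auto
  then show ?thesis
    using False insort_append_greater[of "inorder t @ [k]" x "inorder_list ks ts"] by simp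
qed

lemma leafidx_less:
  "wf_btree t \<Longrightarrow> leafidx x t < length (loads t)"
  "length ts = Suc (length ks) \<Longrightarrow> list_all wf_btree ts \<Longrightarrow>
     leafidx_l x ks ts < length (concat (map loads ts))"
  by (induction x t and x ks ts rule: leafidx_leafidx_l.induct)
     (auto simp: nleaves_eq_length_loads)

lemma ins_inorder_loads:
  "wf_btree t \<Longrightarrow> sorted_wrt (<) (inorder t) \<Longrightarrow> x \<notin> set (inorder t) \<Longrightarrow>
    wf_up (ins m x t) \<and> inorder_up (ins m x t) = insort x (inorder t) \<and>
    loads_up (ins m x t) = add_key m (leafidx x t) (loads t)"
  "length ts = Suc (length ks) \<Longrightarrow> list_all wf_btree ts \<Longrightarrow>
   sorted_wrt (<) (inorder_list ks ts) \<Longrightarrow> x \<notin> set (inorder_list ks ts) \<Longrightarrow>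
    case ins_l m x ks ts of (ks', ts') \<Rightarrow>
      length ts' = Suc (length ks') \<and> list_all wf_btree ts' \<and>
      inorder_list ks' ts' = insort x (inorder_list ks ts) \<and>
      concat (map loads ts') = add_key m (leafidx_l x ks ts) (concat (map loads ts))"
proof (induction m x t and m x ks ts rule: ins_ins_l.induct)
  case (1 m x ks ts)
  show ?case
  proof (cases "ts = []")
    case True
    then show ?thesis
      using node_of_leaf[of m "insort x ks"] by (simp add: add_key_def)
  next
    case False
    with "1.prems" have "length ts = Suc (length ks)" "list_all wf_btree ts"
      by auto
    moreover obtain ks' ts' where "ins_l m x ks ts = (ks', ts')"
      by fastforce
    ultimately show ?thesis
      using "1.IH" "1.prems" False node_of_inner[of ts' ks' m] by auto
  qed
next
  case (2 m x k ks t ts)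
  note sorted = sorted_inorder_list_Cons[OF "2.prems"(3)]
  have insort: "insort x (inorder_list (k # ks) (t # ts)) =
    (if x < k then insort x (inorder t) @ k # inorder_list ks ts
     else inorder t @ k # insort x (inorder_list ks ts))"
    using insort_inorder_list_Cons "2.prems"(3,4) by simp
  show ?case
  proof (cases "x < k")
    case True
    have "wf_up (ins m x t) \<and> inorder_up (ins m x t) = insort x (inorder t) \<and>
        loads_up (ins m x t) = add_key m (leafidx x t) (loads t)"
      using "2.IH"(1)[OF True] "2.prems" sorted by simp
    moreover have "leafidx x t < length (loads t)"
      using "2.prems"(2) by (simp add: leafidx_less)
    ultimately show ?thesis
      using "2.prems" True insort merge_up_inorder_loads[of "ins m x t" ts "k # ks"]
      by (auto simp: add_key_append_left split: prod.splits)
  next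
    case False
    then show ?thesis
      using "2.IH"(2)[OF False] "2.prems" sorted insort
      by (auto simp: add_key_append_right nleaves_eq_length_loads split: prod.splits)
  qed
next
  case (3 m x t ts)
  then show ?case
    using merge_up_inorder_loads[of "ins m x t" ts "[]"] by (auto split: prod.splits)
qed simp

lemma btree_insert_inorder_loads:
  assumes "wf_btree t" "sorted_wrt (<) (inorder t)" "x \<notin> set (inorder t)"
  shows "wf_btree (btree_insert m x t) \<and> inorder (btree_insert m x t) = insort x (inorder t) \<and>
         loads (btree_insert m x t) = add_key m (leafidx x t) (loads t)"
  using ins_inorder_loads(1)[OF assms, of m] by (cases "ins m x t") (auto simp: btree_insert_def)

section \<open>The receiving leaf is determined by the rank of the key\<close>

text \<open>The leaf containing gap number \<open>r\<close> when the leaf loads are \<open>L\<close>, a leaf with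
  \<open>a\<close> keys having \<open>a + 1\<close> gaps.\<close>
fun gap_leaf :: "nat list \<Rightarrow> nat \<Rightarrow> nat" where
  "gap_leaf [] r = 0"
| "gap_leaf (a # L) r = (if r \<le> a then 0 else Suc (gap_leaf L (r - Suc a)))"

lemma gap_leaf_append_left:
  "r < sum_list (map Suc A) \<Longrightarrow> gap_leaf (A @ B) r = gap_leaf A r"
  by (induction A arbitrary: r) auto

lemma gap_leaf_append_right:
  "sum_list (map Suc A) \<le> r \<Longrightarrow>
   gap_leaf (A @ B) r = length A + gap_leaf B (r - sum_list (map Suc A))"
  by (induction A arbitrary: r) (auto simp: diff_diff_add)

lemma card_gap_leaf:
  "i < length L \<Longrightarrow> card {r. r < sum_list (map Suc L) \<and> gap_leaf L r = i} = Suc (L ! i)"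
proof (induction L arbitrary: i)
  case Nil
  then show ?case by simp
next
  case (Cons a L)
  show ?case
  proof (cases i)
    case 0
    then have "{r. r < sum_list (map Suc (a # L)) \<and> gap_leaf (a # L) r = i} = {..a}"
      by auto
    then show ?thesis
      using 0 by simp
  next
    case (Suc i')
    have "{r. r < sum_list (map Suc (a # L)) \<and> gap_leaf (a # L) r = i} =
          (\<lambda>r. r + Suc a) ` {r. r < sum_list (map Suc L) \<and> gap_leaf L r = i'}"
    proof (rule set_eqI)
      fix r
      show "r \<in> {r. r < sum_list (map Suc (a # L)) \<and> gap_leaf (a # L) r = i} \<longleftrightarrow>
            r \<in> (\<lambda>r. r + Suc a) ` {r. r < sum_list (map Suc L) \<and> gap_leaf L r = i'}"
        using Suc by (cases "r \<le> a") (auto intro: image_eqI[of _ _ "r - Suc a"])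
    qed
    then show ?thesis
      using Cons Suc by (simp add: card_image inj_on_def)
  qed
qed

lemma length_inorder:
  "wf_btree t \<Longrightarrow> Suc (length (inorder t)) = sum_list (map Suc (loads t))"
  "length ts = Suc (length ks) \<Longrightarrow> list_all wf_btree ts \<Longrightarrow>
     Suc (length (inorder_list ks ts)) = sum_list (map Suc (concat (map loads ts)))"
  by (induction t and ks ts rule: inorder_inorder_list.induct) auto

lemma leafidx_eq_gap_leaf:
  "wf_btree t \<Longrightarrow> sorted_wrt (<) (inorder t) \<Longrightarrow> x \<notin> set (inorder t) \<Longrightarrow>
     leafidx x t = gap_leaf (loads t) (length (filter (\<lambda>y. y < x) (inorder t)))"
  "length ts = Suc (length ks) \<Longrightarrow> list_all wf_btree ts \<Longrightarrow>
   sorted_wrt (<) (inorder_list ks ts) \<Longrightarrow> x \<notin> set (inorder_list ks ts) \<Longrightarrow>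
     leafidx_l x ks ts = gap_leaf (concat (map loads ts)) (length (filter (\<lambda>y. y < x) (inorder_list ks ts)))"
proof (induction x t and x ks ts rule: leafidx_leafidx_l.induct)
  case (1 x ks ts)
  then show ?case
    by (cases "ts = []") (auto simp: le_imp_less_Suc)
next
  case (2 x k ks t ts)
  note sorted = sorted_inorder_list_Cons[OF "2.prems"(3)]
  have gaps_t: "Suc (length (inorder t)) = sum_list (map Suc (loads t))"
    using "2.prems"(2) by (simp add: length_inorder)
  show ?case
  proof (cases "x < k")
    case True
    then have "filter (\<lambda>y. y < x) (inorder_list (k # ks) (t # ts)) = filter (\<lambda>y. y < x) (inorder t)"
      using sorted by (auto intro!: filter_False)
    moreover have "length (filter (\<lambda>y. y < x) (inorder t)) < sum_list (map Suc (loads t))"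
      using gaps_t by (metis length_filter_le less_Suc_eq_le)
    ultimately show ?thesis
      using "2.IH"(1)[OF True] "2.prems" sorted True by (simp add: gap_leaf_append_left)
  next
    case False
    then have "k < x"
      using "2.prems"(4) by auto
    then have "filter (\<lambda>y. y < x) (inorder_list (k # ks) (t # ts)) =
               inorder t @ k # filter (\<lambda>y. y < x) (inorder_list ks ts)"
      using sorted by (auto intro!: filter_True)
    then have rank: "length (filter (\<lambda>y. y < x) (inorder_list (k # ks) (t # ts))) =
        sum_list (map Suc (loads t)) + length (filter (\<lambda>y. y < x) (inorder_list ks ts))"
      using gaps_t by simp
    have "leafidx_l x ks ts = gap_leaf (concat (map loads ts)) (length (filter (\<lambda>y. y < x) (inorder_list ks ts)))"
      using "2.IH"(2)[OF False] "2.prems" sorted by simp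
    then show ?thesis
      unfolding rank using False by (simp add: gap_leaf_append_right nleaves_eq_length_loads)
  qed
qed auto

section \<open>Counting the key orders that produce a given sequence of leaves\<close>

fun admissible :: "nat \<Rightarrow> nat list \<Rightarrow> nat list \<Rightarrow> bool" where
  "admissible m L [] = True"
| "admissible m L (i # \<sigma>) = (i < length L \<and> admissible m (add_key m i L) \<sigma>)"

fun gap_prod :: "nat \<Rightarrow> nat list \<Rightarrow> nat list \<Rightarrow> nat" where
  "gap_prod m L [] = 1"
| "gap_prod m L (i # \<sigma>) = Suc (L ! i) * gap_prod m (add_key m i L) \<sigma>"

lemma admissible_snoc:
  "admissible m L (\<sigma> @ [i]) \<longleftrightarrow> admissible m L \<sigma> \<and> i < length (fold (add_key m) \<sigma> L)"
  by (induction \<sigma> arbitrary: L) auto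

lemma gap_prod_snoc:
  "gap_prod m L (\<sigma> @ [i]) = gap_prod m L \<sigma> * Suc (fold (add_key m) \<sigma> L ! i)"
  by (induction \<sigma> arbitrary: L) (auto simp: algebra_simps)

lemma sum_fold_add_key:
  "admissible m L \<sigma> \<Longrightarrow> sum_list (map Suc (fold (add_key m) \<sigma> L)) = sum_list (map Suc L) + length \<sigma>"
  by (induction \<sigma> arbitrary: L) (auto simp: sum_add_key)

definition leaf_indices :: "nat \<Rightarrow> nat list \<Rightarrow> nat list" where
  "leaf_indices m xs = insert_leaves m (BT [hd xs] []) (tl xs)"

lemma insert_leaves_snoc:
  "insert_leaves m t (ys @ [x]) = insert_leaves m t ys @ [leafidx x (fold (btree_insert m) ys t)]"
  by (induction ys arbitrary: t) auto

lemma length_leaf_indices: "length (leaf_indices m xs) = length xs - 1"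
proof -
  have "length (insert_leaves m t ys) = length ys" for t ys
    by (induction ys arbitrary: t) auto
  then show ?thesis
    by (simp add: leaf_indices_def)
qed

lemma history_invariant:
  fixes m x0 :: nat and xs :: "nat list"
  assumes "distinct (x0 # xs)"
  defines "t \<equiv> fold (btree_insert m) xs (BT [x0] [])"
  shows "wf_btree t \<and> sorted_wrt (<) (inorder t) \<and> set (inorder t) = set (x0 # xs) \<and>
    loads t = fold (add_key m) (insert_leaves m (BT [x0] []) xs) [1] \<and>
    admissible m [1] (insert_leaves m (BT [x0] []) xs)"
  using assms(1) unfolding t_def
proof (induction xs rule: rev_induct)
  case (snoc x xs)
  let ?t = "fold (btree_insert m) xs (BT [x0] [])"
  have IH: "wf_btree ?t" "sorted_wrt (<) (inorder ?t)" "set (inorder ?t) = set (x0 # xs)"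
    "loads ?t = fold (add_key m) (insert_leaves m (BT [x0] []) xs) [1]"
    "admissible m [1] (insert_leaves m (BT [x0] []) xs)"
    using snoc by auto
  have x: "x \<notin> set (inorder ?t)"
    using snoc.prems IH(3) by auto
  have "sorted_wrt (<) (insort x (inorder ?t))"
    using IH(2) x by (simp add: strict_sorted_iff sorted_insort distinct_insort)
  moreover have "leafidx x ?t < length (loads ?t)"
    using IH(1) by (rule leafidx_less)
  ultimately show ?case
    using IH x btree_insert_inorder_loads[OF IH(1,2) x, of m]
    by (simp add: insert_leaves_snoc admissible_snoc set_insort_key insert_commute)
qed simp

lemma leaf_indices_snoc:
  assumes "ys \<noteq> []" "distinct ys" "x \<notin> set ys"
  shows "leaf_indices m (ys @ [x]) =
    leaf_indices m ys @ [gap_leaf (fold (add_key m) (leaf_indices m ys) [1]) (rank (insert x (set ys)) x)]"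
proof -
  obtain y0 ys' where ys: "ys = y0 # ys'"
    using assms(1) by (cases ys) auto
  define t where "t = fold (btree_insert m) ys' (BT [y0] [])"
  note inv = history_invariant[of y0 ys' m, folded t_def]
  have "x \<notin> set (inorder t)"
    using inv assms ys by auto
  then have "leafidx x t = gap_leaf (loads t) (length (filter (\<lambda>y. y < x) (inorder t)))"
    using leafidx_eq_gap_leaf(1)[of t x] inv assms(2) ys by auto
  also have "length (filter (\<lambda>y. y < x) (inorder t)) = card ({y. y < x} \<inter> set (inorder t))"
    using inv assms(2) ys by (intro distinct_length_filter) (simp add: strict_sorted_iff)
  also have "{y. y < x} \<inter> set (inorder t) = {y \<in> insert x (set ys). y < x}"
    using inv assms(2) ys by auto
  finally have "leafidx x t = gap_leaf (loads t) (rank (insert x (set ys)) x)"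
    by (simp add: rank_def)
  then show ?thesis
    using inv assms(2) ys by (simp add: leaf_indices_def insert_leaves_snoc t_def)
qed

definition key_orders :: "nat \<Rightarrow> nat set \<Rightarrow> nat list \<Rightarrow> nat list set" where
  "key_orders m S \<sigma> = {xs. distinct xs \<and> set xs = S \<and> xs \<noteq> [] \<and> leaf_indices m xs = \<sigma>}"

lemma finite_key_orders: "finite S \<Longrightarrow> finite (key_orders m S \<sigma>)"
  by (rule finite_subset[OF _ finite_lists_length_eq[of S "card S"]])
     (auto simp: key_orders_def distinct_card)

lemma key_orders_snoc:
  "key_orders m S (\<sigma> @ [i]) =
    (\<Union>x\<in>{x \<in> S. gap_leaf (fold (add_key m) \<sigma> [1]) (rank S x) = i}.
       (\<lambda>ys. ys @ [x]) ` key_orders m (S - {x}) \<sigma>)"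
proof (rule set_eqI, rule iffI)
  fix xs
  assume xs: "xs \<in> key_orders m S (\<sigma> @ [i])"
  then have "length xs \<ge> 2"
    using length_leaf_indices[of m xs] by (simp add: key_orders_def)
  moreover obtain ys x where xs_eq: "xs = ys @ [x]"
    using \<open>length xs \<ge> 2\<close> by (cases xs rule: rev_exhaust) auto
  ultimately have "ys \<noteq> []"
    by auto
  moreover have "distinct ys" "x \<notin> set ys" "set ys = S - {x}" "x \<in> S"
    using xs xs_eq by (auto simp: key_orders_def)
  ultimately have "leaf_indices m ys = \<sigma>" "gap_leaf (fold (add_key m) \<sigma> [1]) (rank S x) = i"
    using xs xs_eq leaf_indices_snoc[of ys x m] by (auto simp: key_orders_def insert_absorb)
  then show "xs \<in> (\<Union>x\<in>{x \<in> S. gap_leaf (fold (add_key m) \<sigma> [1]) (rank S x) = i}.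
       (\<lambda>ys. ys @ [x]) ` key_orders m (S - {x}) \<sigma>)"
    using \<open>ys \<noteq> []\<close> \<open>distinct ys\<close> \<open>set ys = S - {x}\<close> \<open>x \<in> S\<close> xs_eq
    unfolding key_orders_def by blast
next
  fix xs
  assume "xs \<in> (\<Union>x\<in>{x \<in> S. gap_leaf (fold (add_key m) \<sigma> [1]) (rank S x) = i}.
       (\<lambda>ys. ys @ [x]) ` key_orders m (S - {x}) \<sigma>)"
  then obtain x ys where x: "x \<in> S" "gap_leaf (fold (add_key m) \<sigma> [1]) (rank S x) = i"
    and ys: "ys \<in> key_orders m (S - {x}) \<sigma>" and xs_eq: "xs = ys @ [x]"
    by blast
  have "distinct ys" "set ys = S - {x}" "ys \<noteq> []" "leaf_indices m ys = \<sigma>"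
    using ys by (auto simp: key_orders_def)
  moreover have "insert x (S - {x}) = S"
    using x(1) by blast
  ultimately show "xs \<in> key_orders m S (\<sigma> @ [i])"
    using leaf_indices_snoc[of ys x m] x xs_eq by (simp add: key_orders_def)
qed

lemma card_key_orders:
  "card S = Suc (length \<sigma>) \<Longrightarrow> admissible m [1] \<sigma> \<Longrightarrow> card (key_orders m S \<sigma>) = gap_prod m [1] \<sigma>"
proof (induction \<sigma> arbitrary: S rule: rev_induct)
  case Nil
  then obtain a where "S = {a}"
    by (auto simp: card_Suc_eq)
  have "xs = [a]" if "distinct xs" "set xs = {a}" for xs
    using that by (cases xs) (auto dest: subset_singletonD)
  then have "key_orders m S [] = {[a]}"
    using \<open>S = {a}\<close> by (auto simp: key_orders_def length_leaf_indices leaf_indices_def)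
  then show ?case by simp
next
  case (snoc i \<sigma>)
  define L where "L = fold (add_key m) \<sigma> [1]"
  define A where "A = {x \<in> S. gap_leaf L (rank S x) = i}"
  have adm: "admissible m [1] \<sigma>" "i < length L"
    using snoc.prems(2) by (auto simp: admissible_snoc L_def)
  have S: "finite S" "card S = Suc (Suc (length \<sigma>))"
    using snoc.prems(1) card.infinite by force+
  have "card (key_orders m S (\<sigma> @ [i])) = (\<Sum>x\<in>A. card ((\<lambda>ys. ys @ [x]) ` key_orders m (S - {x}) \<sigma>))"
    unfolding key_orders_snoc L_def[symmetric] A_def[symmetric]
    using S(1) by (intro card_UN_disjoint) (auto simp: A_def finite_key_orders)
  also have "\<dots> = card A * gap_prod m [1] \<sigma>"
  proof -
    have "card ((\<lambda>ys. ys @ [x]) ` key_orders m (S - {x}) \<sigma>) = gap_prod m [1] \<sigma>" if "x \<in> A" for x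
      using that S snoc.IH[of "S - {x}"] adm by (simp add: A_def card_image inj_on_def)
    then show ?thesis
      by simp
  qed
  also have "card A = card {r \<in> {..<card S}. gap_leaf L r = i}"
    unfolding A_def by (rule card_filter_bij_betw[OF bij_betw_rank[OF S(1)]])
  also have "card S = sum_list (map Suc L)"
    using sum_fold_add_key[OF adm(1)] S(2) by (simp add: L_def)
  finally show ?case
    using card_gap_leaf[OF adm(2)] by (simp add: gap_prod_snoc L_def)
qed

section \<open>Historic trees carry the leaf loads\<close>

lemma branching_height_iff:
  "branching_height m h \<longleftrightarrow> 2*m \<le> h \<and> (h - 2*m) mod Suc m = 0"
  unfolding branching_height_def
  by (metis add_diff_cancel_left' le_add1 mod_mult_self2_is_0 mult.commute mult_div_mod_eq
      Suc_eq_plus1 add_0_right le_add_diff_inverse)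

text \<open>The counter of \<open>ext_gaps\<close> at height \<open>h\<close>, started at the root with \<open>0\<close>.\<close>
definition gap_counter :: "nat \<Rightarrow> nat \<Rightarrow> nat" where
  "gap_counter m h = (if h \<le> 2*m then h else (h - Suc (2*m)) mod Suc m)"

text \<open>The load of the leaf corresponding to an external vertex at height \<open>h\<close>.\<close>
definition slot_load :: "nat \<Rightarrow> nat \<Rightarrow> nat" where
  "slot_load m h = (if h \<le> 2*m then 0 else m) + gap_counter m h"

lemma gap_counter_Suc:
  "gap_counter m (Suc h) = (if branching_height m h then 0 else Suc (gap_counter m h))"
proof (cases "2*m < h")
  case True
  then have "Suc h - Suc (2*m) = Suc (h - Suc (2*m))" "h - 2*m = Suc (h - Suc (2*m))"
    by auto
  then show ?thesis
    using True by (simp add: gap_counter_def branching_height_iff mod_Suc)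
qed (auto simp: gap_counter_def branching_height_iff)

lemma slot_load_eq_double: "slot_load m h = 2*m \<longleftrightarrow> branching_height m h"
proof (cases "2*m < h")
  case True
  then have "h - 2*m = Suc (h - Suc (2*m))"
    by auto
  then have "(h - Suc (2*m)) mod Suc m = m \<longleftrightarrow> (h - 2*m) mod Suc m = 0"
    by (simp add: mod_Suc)
  then show ?thesis
    using True by (auto simp: slot_load_def gap_counter_def branching_height_iff)
qed (auto simp: slot_load_def gap_counter_def branching_height_iff)

lemma slot_load_Suc:
  "slot_load m (Suc h) = (if branching_height m h then m else Suc (slot_load m h))"
proof -
  have "2*m \<le> h" if "branching_height m h"
    using that by (simp add: branching_height_iff)
  moreover have "h \<noteq> 2*m" if "\<not> branching_height m h"
    using that by (auto simp: branching_height_iff)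
  ultimately show ?thesis
    by (simp add: slot_load_def gap_counter_Suc) (auto simp: gap_counter_def)
qed

fun ext_loads :: "nat \<Rightarrow> nat \<Rightarrow> htree \<Rightarrow> nat list" where
  "ext_loads m h Ext = [slot_load m h]"
| "ext_loads m h (Vtx a ts) = concat (map (ext_loads m (Suc h)) ts)"

lemma length_ext_loads: "length (ext_loads m h T) = nexts T"
  by (induction T arbitrary: h) (simp_all add: length_concat comp_def cong: map_cong)

lemma ext_loads_place:
  "i < nexts T \<Longrightarrow>
    ext_loads m h (place m h l i T) = add_key m i (ext_loads m h T) \<and>
    branchings m h (place m h l i T) = branchings m h T + (if ext_loads m h T ! i = 2*m then 1 else 0)"
  "i < sum_list (map nexts ts) \<Longrightarrow>
    concat (map (ext_loads m h) (place_l m h l i ts)) = add_key m i (concat (map (ext_loads m h) ts)) \<and>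
    sum_list (map (branchings m h) (place_l m h l i ts)) = sum_list (map (branchings m h) ts) +
      (if concat (map (ext_loads m h) ts) ! i = 2*m then 1 else 0)"
proof (induction m h l i T and m h l i ts rule: place_place_l.induct)
  case (1 m h l i)
  then show ?case
    by (simp add: new_vertex_def slots_def numeral_2_eq_2 add_key_def slot_load_Suc
        flip: slot_load_eq_double)
next
  case (4 m h l i t ts)
  then show ?case
    using length_ext_loads[of m h t]
    by (auto simp: add_key_append_left add_key_append_right nth_append)
qed simp_all

definition split_ratio :: "nat \<Rightarrow> real" where
  "split_ratio m = fact (2*m+1) / (fact m)^2"

definition weight :: "nat \<Rightarrow> htree \<Rightarrow> real" where
  "weight m T = split_ratio m ^ branchings m 0 T * (\<Prod>s\<leftarrow>ext_loads m 0 T. fact s)"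

lemma prod_fact_add_key:
  assumes "i < length L"
  shows "(\<Prod>s\<leftarrow>add_key m i L. fact s) * (if L ! i = 2*m then split_ratio m else 1) =
         (\<Prod>s\<leftarrow>L. fact s :: real) * Suc (L ! i)"
proof -
  define v where "v = L ! i"
  define A :: real where "A = (\<Prod>s\<leftarrow>take i L. fact s)"
  define B :: real where "B = (\<Prod>s\<leftarrow>drop (Suc i) L. fact s)"
  have "L = take i L @ v # drop (Suc i) L"
    using assms by (simp add: v_def id_take_nth_drop)
  then have prod_L: "(\<Prod>s\<leftarrow>L. fact s :: real) = A * fact v * B"
    unfolding A_def B_def by (metis (no_types) list.simps(9) map_append mult.assoc prod_list.Cons prod_list.append)
  show ?thesis
  proof (cases "v = 2*m")
    case True
    have "split_ratio m * (fact m * fact m) = fact (Suc (2*m))"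
      by (simp add: split_ratio_def power2_eq_square)
    then have ratio: "split_ratio m * (fact m * fact m) = fact v * Suc v"
      using True by (simp only: fact_Suc) (simp add: algebra_simps)
    have "(\<Prod>s\<leftarrow>add_key m i L. fact s) * split_ratio m = A * B * (split_ratio m * (fact m * fact m))"
      using True by (simp add: add_key_def A_def B_def v_def[symmetric] ac_simps)
    also have "\<dots> = (\<Prod>s\<leftarrow>L. fact s :: real) * Suc v"
      unfolding ratio prod_L by (simp add: algebra_simps)
    finally show ?thesis
      using True by (simp add: v_def)
  next
    case False
    then show ?thesis
      unfolding prod_L by (simp add: add_key_def A_def B_def v_def[symmetric] ac_simps)
  qed
qed

lemma weight_place:
  assumes "i < nexts T"
  shows "weight m (place m 0 l i T) = weight m T * Suc (ext_loads m 0 T ! i)"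
proof -
  let ?L = "ext_loads m 0 T"
  have "weight m (place m 0 l i T) = split_ratio m ^ branchings m 0 T *
      ((\<Prod>s\<leftarrow>add_key m i ?L. fact s) * (if ?L ! i = 2*m then split_ratio m else 1))"
    using ext_loads_place(1)[OF assms, of m 0 l]
    by (cases "?L ! i = 2*m") (simp_all add: weight_def ac_simps)
  also have "\<dots> = weight m T * Suc (?L ! i)"
    using prod_fact_add_key[of i ?L m] assms by (simp add: weight_def length_ext_loads ac_simps)
  finally show ?thesis .
qed

abbreviation initial_htree :: "nat \<Rightarrow> htree" where
  "initial_htree m \<equiv> new_vertex m 0 1"

lemma build_snoc: "build m k T (\<sigma> @ [i]) = place m 0 (k + length \<sigma>) i (build m k T \<sigma>)"
  by (induction \<sigma> arbitrary: k T) auto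

lemma build_ext_loads_weight:
  assumes "m \<ge> 1" "admissible m [1] \<sigma>"
  shows "ext_loads m 0 (build m 2 (initial_htree m) \<sigma>) = fold (add_key m) \<sigma> [1] \<and>
         weight m (build m 2 (initial_htree m) \<sigma>) = gap_prod m [1] \<sigma>"
  using assms(2)
proof (induction \<sigma> rule: rev_induct)
  case Nil
  have "\<not> branching_height m 0" "slot_load m 1 = 1"
    using assms(1) by (auto simp: branching_height_iff slot_load_def gap_counter_def)
  then show ?case
    by (simp add: new_vertex_def slots_def weight_def)
next
  case (snoc i \<sigma>)
  let ?B = "build m 2 (initial_htree m) \<sigma>"
  have IH: "ext_loads m 0 ?B = fold (add_key m) \<sigma> [1]" "weight m ?B = gap_prod m [1] \<sigma>"
    using snoc by (auto simp: admissible_snoc)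
  then have "i < nexts ?B"
    using snoc.prems length_ext_loads[of m 0 ?B] by (simp add: admissible_snoc)
  then show ?case
    using IH ext_loads_place(1)[of i ?B m 0] weight_place[of i ?B m]
    by (simp add: build_snoc gap_prod_snoc algebra_simps)
qed

lemma ext_loads_eq_ext_gaps:
  "hwf m h T \<Longrightarrow> (h \<le> 2*m \<Longrightarrow> branchings m h T \<ge> 1) \<Longrightarrow>
    ext_loads m h T = map ((+) m) (ext_gaps m h (gap_counter m h) T)"
proof (induction T arbitrary: h)
  case Ext
  then have "\<not> h \<le> 2*m"
    by auto
  then show ?case
    by (simp add: slot_load_def)
next
  case (Vtx a ts)
  have "branchings m (Suc h) t \<ge> 1" if "t \<in> set ts" "Suc h \<le> 2*m" for t
  proof -
    have "\<not> branching_height m h"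
      using that(2) by (simp add: branching_height_iff)
    then have "ts = [t]"
      using Vtx.prems(1) that(1) by (auto simp: slots_def length_Suc_conv)
    then show ?thesis
      using Vtx.prems that(2) \<open>\<not> branching_height m h\<close> by simp
  qed
  then show ?case
    using Vtx by (auto simp: map_concat gap_counter_Suc list_all_iff intro!: arg_cong[where f = concat])
qed

section \<open>Every historic tree is built from exactly one admissible leaf sequence\<close>

fun delete_label :: "nat \<Rightarrow> htree \<Rightarrow> htree" where
  "delete_label l Ext = Ext"
| "delete_label l (Vtx a ts) = (if a = l then Ext else Vtx a (map (delete_label l) ts))"

lemma delete_label_absent: "l \<notin> set (labels T) \<Longrightarrow> delete_label l T = T"
  by (induction T) (auto intro: map_idI)

lemma delete_label_place:
  "l \<notin> set (labels T) \<Longrightarrow> delete_label l (place m h l i T) = T"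
  "l \<notin> set (concat (map labels ts)) \<Longrightarrow> map (delete_label l) (place_l m h l i ts) = ts"
  by (induction m h l i T and m h l i ts rule: place_place_l.induct)
     (auto simp: new_vertex_def delete_label_absent intro: map_idI)

lemma hwf_delete_label: "hwf m h T \<Longrightarrow> hwf m h (delete_label l T)"
proof (induction T arbitrary: h)
  case (Vtx a ts)
  have "hwf m (Suc h) (delete_label l t) \<and>
        (case root_label (delete_label l t) of None \<Rightarrow> True | Some b \<Rightarrow> a < b)"
    if "t \<in> set ts" for t
  proof -
    have "hwf m (Suc h) t" "case root_label t of None \<Rightarrow> True | Some b \<Rightarrow> a < b"
      using Vtx.prems that by (auto simp: list_all_iff)
    then show ?thesis
      using Vtx.IH[OF that] by (cases t) auto
  qed
  then have "list_all (\<lambda>t. hwf m (Suc h) t \<and>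
      (case root_label t of None \<Rightarrow> True | Some b \<Rightarrow> a < b)) (map (delete_label l) ts)"
    by (simp add: list_all_iff)
  then show ?case
    using Vtx.prems by simp
qed simp

lemma mset_labels_place:
  "i < nexts T \<Longrightarrow> mset (labels (place m h l i T)) = add_mset l (mset (labels T))"
  "i < sum_list (map nexts ts) \<Longrightarrow>
     mset (concat (map labels (place_l m h l i ts))) = add_mset l (mset (concat (map labels ts)))"
  by (induction m h l i T and m h l i ts rule: place_place_l.induct)
     (auto simp: new_vertex_def)

lemma place_inj:
  "i < nexts T \<Longrightarrow> j < nexts T \<Longrightarrow> l \<notin> set (labels T) \<Longrightarrow>
     place m h l i T = place m h l j T \<Longrightarrow> i = j"
  "i < sum_list (map nexts ts) \<Longrightarrow> j < sum_list (map nexts ts) \<Longrightarrow>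
   l \<notin> set (concat (map labels ts)) \<Longrightarrow> place_l m h l i ts = place_l m h l j ts \<Longrightarrow> i = j"
proof (induction m h l i T and m h l i ts arbitrary: j and j rule: place_place_l.induct)
  case (4 m h l i t ts)
  have placed: "l \<in> set (labels (place m h l k t))" if "k < nexts t" for k
  proof -
    have "l \<in># mset (labels (place m h l k t))"
      using mset_labels_place(1)[OF that] by simp
    then show ?thesis
      by simp
  qed
  consider "i < nexts t" "j < nexts t" | "i < nexts t" "\<not> j < nexts t" | "\<not> i < nexts t" "j < nexts t"
    | "\<not> i < nexts t" "\<not> j < nexts t"
    by blast
  then show ?case
  proof cases
    case 1
    then have "place m h l i t = place m h l j t"
      using "4.prems"(4) by simp
    then show ?thesis
      using "4.IH"(1)[OF 1(1) 1(1) 1(2)] "4.prems"(3) by simp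
  next
    case 2
    then have "place m h l i t = t"
      using "4.prems"(4) by simp
    then show ?thesis
      using placed[OF 2(1)] "4.prems"(3) by simp
  next
    case 3
    then have "place m h l j t = t"
      using "4.prems"(4) by simp
    then show ?thesis
      using placed[OF 3(2)] "4.prems"(3) by simp
  next
    case outside: 4
    then have "i - nexts t < sum_list (map nexts ts)" "j - nexts t < sum_list (map nexts ts)"
      using "4.prems"(1,2) by auto
    moreover have "place_l m h l (i - nexts t) ts = place_l m h l (j - nexts t) ts"
      using "4.prems"(4) outside by simp
    ultimately have "i - nexts t = j - nexts t"
      using "4.IH"(2)[OF outside(1)] "4.prems"(3) by simp
    then show ?thesis
      using outside by linarith
  qed
qed auto

lemma place_l_append:
  "i < nexts t \<Longrightarrow>
   place_l m h l (sum_list (map nexts ts1) + i) (ts1 @ t # ts2) = ts1 @ place m h l i t # ts2"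
  by (induction ts1) auto

text \<open>The vertex with the largest label is a leaf, so it was placed last.\<close>
lemma place_delete_max_label:
  "hwf m h T \<Longrightarrow> distinct (labels T) \<Longrightarrow> l \<in> set (labels T) \<Longrightarrow> \<forall>x\<in>set (labels T). x \<le> l \<Longrightarrow>
    \<exists>i < nexts (delete_label l T). place m h l i (delete_label l T) = T"
proof (induction T arbitrary: h)
  case (Vtx a ts)
  show ?case
  proof (cases "a = l")
    case True
    have "t = Ext" if "t \<in> set ts" for t
    proof (rule ccontr)
      assume "t \<noteq> Ext"
      then obtain b us where t_eq: "t = Vtx b us"
        by (cases t) auto
      have "a < b"
        using Vtx.prems(1) that t_eq by (auto simp: list_all_iff)
      moreover have "b \<in> set (labels (Vtx a ts))"
        using that t_eq by force
      ultimately show False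
        using Vtx.prems(4) True by fastforce
    qed
    moreover have "length ts = slots m h"
      using Vtx.prems(1) by simp
    ultimately have "ts = replicate (slots m h) Ext"
      by (simp add: list_eq_iff_nth_eq)
    then show ?thesis
      using True by (simp add: new_vertex_def)
  next
    case False
    then obtain t where t: "t \<in> set ts" "l \<in> set (labels t)"
      using Vtx.prems(3) by auto
    then obtain ts1 ts2 where ts: "ts = ts1 @ t # ts2"
      using split_list[OF t(1)] by blast
    have "distinct (labels t)" "\<forall>u\<in>set ts1 \<union> set ts2. l \<notin> set (labels u)"
      using Vtx.prems(2) t(2) unfolding ts by (auto simp: distinct_append)
    then have delete: "map (delete_label l) ts = ts1 @ delete_label l t # ts2"
      unfolding ts by (auto simp: delete_label_absent intro: map_idI)
    have "hwf m (Suc h) t"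
      using Vtx.prems(1) t(1) by (simp add: list_all_iff)
    moreover have "\<forall>x\<in>set (labels t). x \<le> l"
      using Vtx.prems(4) t(1) by auto
    ultimately obtain i where "i < nexts (delete_label l t)" "place m (Suc h) l i (delete_label l t) = t"
      using Vtx.IH[OF t(1)] \<open>distinct (labels t)\<close> t(2) by blast
    then show ?thesis
      using False delete place_l_append[of i "delete_label l t" m "Suc h" l ts1 ts2]
      by (intro exI[of _ "sum_list (map nexts ts1) + i"]) (simp add: ts)
  qed
qed simp

lemma labels_place_subset:
  "set (labels (place m h l i T)) \<subseteq> insert l (set (labels T))"
  "set (concat (map labels (place_l m h l i ts))) \<subseteq> insert l (set (concat (map labels ts)))"
  by (induction m h l i T and m h l i ts rule: place_place_l.induct) (auto simp: new_vertex_def)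

lemma labels_build: "set (labels (build m k T \<sigma>)) \<subseteq> set (labels T) \<union> {k..<k + length \<sigma>}"
proof (induction \<sigma> arbitrary: k T)
  case (Cons i \<sigma>)
  then show ?case
    using labels_place_subset(1)[of m 0 k i T] by fastforce
qed simp

lemma labels_initial_htree: "m \<ge> 1 \<Longrightarrow> labels (initial_htree m) = [1]"
  by (simp add: new_vertex_def slots_def branching_height_def)

lemma build_inj:
  assumes "m \<ge> 1" "admissible m [1] \<sigma>" "admissible m [1] \<sigma>'" "length \<sigma> = length \<sigma>'"
    and "build m 2 (initial_htree m) \<sigma> = build m 2 (initial_htree m) \<sigma>'"
  shows "\<sigma> = \<sigma>'"
  using assms(2-)
proof (induction \<sigma> arbitrary: \<sigma>' rule: rev_induct)
  case (snoc i \<sigma>)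
  obtain \<tau> j where \<sigma>': "\<sigma>' = \<tau> @ [j]"
    using snoc.prems(3) by (cases \<sigma>' rule: rev_exhaust) auto
  let ?l = "2 + length \<sigma>"
  let ?B = "build m 2 (initial_htree m) \<sigma>"
  let ?B' = "build m 2 (initial_htree m) \<tau>"
  have len: "length \<sigma> = length \<tau>"
    using snoc.prems(3) \<sigma>' by simp
  have fresh: "?l \<notin> set (labels ?B)" "?l \<notin> set (labels ?B')"
    using labels_build[of m 2 "initial_htree m" \<sigma>] labels_build[of m 2 "initial_htree m" \<tau>]
      labels_initial_htree[OF assms(1)] len by auto
  have placed: "place m 0 ?l i ?B = place m 0 ?l j ?B'"
    using snoc.prems(4) \<sigma>' len by (simp add: build_snoc)
  then have "?B = ?B'"
    by (metis delete_label_place(1) fresh)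
  then have "\<sigma> = \<tau>"
    using snoc.IH snoc.prems(1,2) \<sigma>' len by (simp add: admissible_snoc)
  moreover have "i < nexts ?B" "j < nexts ?B"
    using snoc.prems(1,2) \<sigma>' \<open>\<sigma> = \<tau>\<close> build_ext_loads_weight[OF assms(1)] length_ext_loads
    by (simp_all add: admissible_snoc) metis+
  ultimately have "i = j"
    using place_inj(1)[OF _ _ fresh(1)] placed by simp
  with \<open>\<sigma> = \<tau>\<close> show ?case
    using \<sigma>' by simp
qed simp

lemma labels_eq_Nil_iff: "labels T = [] \<longleftrightarrow> T = Ext"
  by (cases T) auto

lemma historic_ge_1:
  assumes "historic m n H"
  shows "n \<ge> 1"
proof -
  obtain a ts where "H = Vtx a ts"
    using assms by (cases H) (auto simp: historic_def)
  then have "a \<in> {1..n}"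
    using assms unfolding historic_def by (metis labels.simps(2) list.set_intros(1))
  then show ?thesis
    by simp
qed

lemma historic_delete_last:
  assumes "historic m (Suc n) H"
  defines "H' \<equiv> delete_label (Suc n) H"
  shows "\<exists>i < nexts H'. place m 0 (Suc n) i H' = H"
    and "hwf m 0 H'" "distinct (labels H')" "set (labels H') = {1..n}"
proof -
  have H: "hwf m 0 H" "distinct (labels H)" "set (labels H) = {1..Suc n}"
    using assms(1) by (auto simp: historic_def)
  then show ex: "\<exists>i < nexts H'. place m 0 (Suc n) i H' = H"
    unfolding H'_def by (intro place_delete_max_label) auto
  show "hwf m 0 H'"
    unfolding H'_def using H(1) by (rule hwf_delete_label)
  from ex have ms: "mset (labels H) = mset (Suc n # labels H')"
    using mset_labels_place(1) by fastforce
  then have "distinct (Suc n # labels H')"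
    using H(2) mset_eq_imp_distinct_iff by blast
  then show "distinct (labels H')"
    by simp
  have "insert (Suc n) (set (labels H')) = {1..Suc n}"
    using mset_eq_setD[OF ms] H(3) by simp
  then show "set (labels H') = {1..n}"
    using \<open>distinct (Suc n # labels H')\<close> by (simp add: atLeastAtMostSuc_conv insert_ident)
qed

lemma build_surj:
  assumes "m \<ge> 1" "historic m n H"
  shows "\<exists>\<sigma>. length \<sigma> = n - 1 \<and> admissible m [1] \<sigma> \<and> build m 2 (initial_htree m) \<sigma> = H"
  using assms(2)
proof (induction n arbitrary: H)
  case 0
  then show ?case
    by (auto simp: historic_def labels_eq_Nil_iff)
next
  case (Suc n)
  define H' where "H' = delete_label (Suc n) H"
  obtain i where i: "i < nexts H'" "place m 0 (Suc n) i H' = H"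
    using historic_delete_last(1)[OF Suc.prems] unfolding H'_def by blast
  have H': "hwf m 0 H'" "distinct (labels H')" "set (labels H') = {1..n}"
    using historic_delete_last(2-4)[OF Suc.prems] unfolding H'_def by auto
  show ?case
  proof (cases "n = 0")
    case True
    then have "H' = Ext"
      using H'(3) by (simp add: labels_eq_Nil_iff[symmetric])
    then have "build m 2 (initial_htree m) [] = H"
      using i True by simp
    then show ?thesis
      using True by (intro exI[of _ "[]"]) simp
  next
    case False
    then have "historic m n H'"
      using H' by (auto simp: historic_def)
    then obtain \<sigma> where \<sigma>: "length \<sigma> = n - 1" "admissible m [1] \<sigma>" "build m 2 (initial_htree m) \<sigma> = H'"
      using Suc.IH by blast
    then have "admissible m [1] (\<sigma> @ [i])"
      using build_ext_loads_weight[OF assms(1) \<sigma>(2)] length_ext_loads[of m 0 H'] i(1) by (simp add: admissible_snoc)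
    moreover have "build m 2 (initial_htree m) (\<sigma> @ [i]) = H"
      using \<sigma> False i(2) by (simp add: build_snoc)
    ultimately show ?thesis
      using \<sigma>(1) False by (intro exI[of _ "\<sigma> @ [i]"]) simp
  qed
qed

lemma Phi_keys_eq_build:
  "xs \<noteq> [] \<Longrightarrow> Phi_keys m xs = build m 2 (initial_htree m) (leaf_indices m xs)"
  by (cases xs) (simp_all add: leaf_indices_def)

lemma admissible_leaf_indices:
  "distinct xs \<Longrightarrow> xs \<noteq> [] \<Longrightarrow> admissible m [1] (leaf_indices m xs)"
  using history_invariant[of "hd xs" "tl xs" m] by (cases xs) (simp_all add: leaf_indices_def)

lemma Phi_keys_preimage:
  assumes "m \<ge> 1" "card S = Suc (length \<sigma>)" "admissible m [1] \<sigma>"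
  shows "{xs. distinct xs \<and> set xs = S \<and> Phi_keys m xs = build m 2 (initial_htree m) \<sigma>} =
         key_orders m S \<sigma>"
proof (rule set_eqI, rule iffI)
  fix xs
  assume "xs \<in> {xs. distinct xs \<and> set xs = S \<and> Phi_keys m xs = build m 2 (initial_htree m) \<sigma>}"
  then have xs: "distinct xs" "set xs = S" "Phi_keys m xs = build m 2 (initial_htree m) \<sigma>"
    by auto
  then have "length xs = Suc (length \<sigma>)"
    using assms(2) distinct_card by fastforce
  then have "xs \<noteq> []" "length (leaf_indices m xs) = length \<sigma>"
    by (auto simp: length_leaf_indices)
  then have "leaf_indices m xs = \<sigma>"
    using build_inj[OF assms(1) admissible_leaf_indices assms(3)] xs Phi_keys_eq_build by metis
  then show "xs \<in> key_orders m S \<sigma>"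
    using xs \<open>xs \<noteq> []\<close> by (simp add: key_orders_def)
qed (auto simp: key_orders_def Phi_keys_eq_build)

theorem proposition1p3:
  fixes m n :: nat and H :: htree
  assumes "m \<ge> 1"
    and "historic m n H"
    and "branchings m 0 H \<ge> 1"
  shows "real (card {p. p permutes {1..n} \<and> Phi_keys m (map p [1..<Suc n]) = H})
         = (fact (2*m+1) / (fact m)^2) ^ (branchings m 0 H)
           * (\<Prod>s\<leftarrow>ext_gaps m 0 0 H. fact (m + s))"
proof -
  obtain \<sigma> where \<sigma>: "length \<sigma> = n - 1" "admissible m [1] \<sigma>" "build m 2 (initial_htree m) \<sigma> = H"
    using build_surj[OF assms(1,2)] by blast
  have "n \<ge> 1"
    using assms(2) by (rule historic_ge_1)
  have "card {p. p permutes {1..n} \<and> Phi_keys m (map p [1..<Suc n]) = H} =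
        card {xs. distinct xs \<and> set xs = {1..n} \<and> Phi_keys m xs = H}"
    using card_filter_bij_betw[OF bij_betw_permutes_lists, where P = "\<lambda>xs. Phi_keys m xs = H"]
    by (simp del: upt_Suc)
  also have "\<dots> = card (key_orders m {1..n} \<sigma>)"
    using Phi_keys_preimage[OF assms(1) _ \<sigma>(2), of "{1..n}"] \<sigma>(1,3) \<open>n \<ge> 1\<close> by simp
  also have "\<dots> = gap_prod m [1] \<sigma>"
    using card_key_orders[OF _ \<sigma>(2)] \<sigma>(1) \<open>n \<ge> 1\<close> by simp
  finally have "real (card {p. p permutes {1..n} \<and> Phi_keys m (map p [1..<Suc n]) = H}) = weight m H"
    using build_ext_loads_weight[OF assms(1) \<sigma>(2)] \<sigma>(3) by simp
  also have "\<dots> = split_ratio m ^ branchings m 0 H * (\<Prod>s\<leftarrow>ext_gaps m 0 0 H. fact (m + s))"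
    using ext_loads_eq_ext_gaps[of m 0 H] assms(2,3)
    by (simp add: weight_def historic_def gap_counter_def comp_def)
  finally show ?thesis
    by (simp add: split_ratio_def)
qed

end
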